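(* Let $\mathcal{E}$ be an even Dirichlet form on $L^2(X,m)$ with growth type at most $r\ge 2$, let $\mathfrak{D}$ be its Dirichlet space and $\partial\mathcal{E}$ its subgradient. Let $q\ge 2$, $\lambda>0$, $f\in L^2(X,m)\cap L^q(X,m)$, and let $u\in L^2(X,m)$ be the solution of $\partial\mathcal{E}(u)+\lambda u\ni f$, i.e. $(u,f-\lambda u)\in\partial\mathcal{E}$. Let $p\ge 2$ be such that $\left(1-\frac2q\right)\frac pr>1$, and assume that $\mathfrak{D}$ embeds continuously into $L^p(X,m)$. Then $u\in L^\infty(X,m)$.
   Context: Standing setting: $X$ is a Hausdorff topological space and $m$ is a Borel measure on $X$ with full support, i.e. no nonempty open subset of $X$ has $m$-measure zero. $L^2(X,m)$ is the real $L^2$ space with inner product $\langle\cdot,\cdot\rangle_{L^2}$. A Dirichlet form is a functional $\mathcal{E}:L^2(X,m)\to[0,\infty]$ that is convex, lower semicontinuous and densely defined (its effective domain $\mathrm{dom}(\mathcal{E})=\{u:\mathcal{E}(u)<\infty\}$ is dense in $L^2(X,m)$), and such that for all $u,v\in L^2(X,m)$ and $\alpha>0$: (1) $\mathcal{E}(u\wedge v)+\mathcal{E}(u\vee v)\le \mathcal{E}(u)+\mathcal{E}(v)$; (2) $\mathcal{E}\big(v+\tfrac12((u-v+\alpha)_+-(u-v-\alpha)_-)\big)+\mathcal{E}\big(u-\tfrac12((u-v+\alpha)_+-(u-v-\alpha)_-)\big)\le \mathcal{E}(u)+\mathcal{E}(v)$, where $(\cdot)_+$, $(\cdot)_-$ denote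 positive and negative parts. $\mathcal{E}$ is called even if $\mathcal{E}(0)=0$ and $\mathcal{E}(-u)=\mathcal{E}(u)$ for all $u$. A Dirichlet form $\mathcal{E}$ has growth type at most $r$ ($r\ge 2$) if $\mathcal{E}(\lambda u)\le\lambda^r\mathcal{E}(u)$ for every $u\in L^2(X,m)$ and every $\lambda\ge 1$. The subgradient is $\partial\mathcal{E}=\{(u,f)\in L^2\times L^2: u\in\mathrm{dom}(\mathcal{E}),\ \langle f,v-u\rangle_{L^2}\le\mathcal{E}(v)-\mathcal{E}(u)\text{ for all }v\in L^2(X,m)\}$; it is a maximal monotone operator, so for every $\lambda>0$ and $f\in L^2(X,m)$ there is a unique $u$ with $(u,f-\lambda u)\in\partial\mathcal{E}$. Set $\mathcal{E}_1(u)=\|u\|_{L^2(X,m)}^2+\mathcal{E}(u)$. The Dirichlet space is $\mathfrak{D}=\{u\in L^2(X,m):\exists\lambda>0,\ \mathcal{E}_1(\lambda u)<\infty\}$ with the Minkowski norm $\|u\|_{\mathfrak{D}}=\inf\{\lambda>0:\mathcal{E}_1(u/\lambda)\le 1\}$. "$\mathfrak{D}$ embeds continuously into $L^p$" means $\mathfrak{D}\subseteq L^p(X,m)$ and $\|u\|_{L^p}\le c\|u\|_{\mathfrak{D}}$ for some $c$ and all $u\in\mathfrak{D}$. *)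

theory Defs
  imports "HOL-Analysis.Analysis"
begin

text \<open>Functions on X; elements of L^2(X,m) are represented by measurable
  square-integrable functions, and all notions below respect a.e. equality.\<close>

definition memLp :: "real \<Rightarrow> 'a measure \<Rightarrow> ('a \<Rightarrow> real) \<Rightarrow> bool" where
  "memLp p M u \<longleftrightarrow> u \<in> borel_measurable M \<and> integrable M (\<lambda>x. \<bar>u x\<bar> powr p)"

definition memL2 :: "'a measure \<Rightarrow> ('a \<Rightarrow> real) \<Rightarrow> bool" where
  "memL2 M u \<longleftrightarrow> u \<in> borel_measurable M \<and> integrable M (\<lambda>x. (u x)^2)"

definition memLinf :: "'a measure \<Rightarrow> ('a \<Rightarrow> real) \<Rightarrow> bool" where
  "memLinf M u \<longleftrightarrow> u \<in> borel_measurable M \<and> (\<exists>C. AE x in M. \<bar>u x\<bar> \<le> C)"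

definition Lp_norm :: "real \<Rightarrow> 'a measure \<Rightarrow> ('a \<Rightarrow> real) \<Rightarrow> real" where
  "Lp_norm p M u = (\<integral>x. \<bar>u x\<bar> powr p \<partial>M) powr (1 / p)"

definition L2_inner :: "'a measure \<Rightarrow> ('a \<Rightarrow> real) \<Rightarrow> ('a \<Rightarrow> real) \<Rightarrow> real" where
  "L2_inner M f g = (\<integral>x. f x * g x \<partial>M)"

definition L2_norm :: "'a measure \<Rightarrow> ('a \<Rightarrow> real) \<Rightarrow> real" where
  "L2_norm M u = sqrt (\<integral>x. (u x)^2 \<partial>M)"

definition posp :: "real \<Rightarrow> real" where "posp x = max x 0"
definition negp :: "real \<Rightarrow> real" where "negp x = max (- x) 0"

definition dirichlet_form :: "'a measure \<Rightarrow> (('a \<Rightarrow> real) \<Rightarrow> ennreal) \<Rightarrow> bool" where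
  "dirichlet_form M E \<longleftrightarrow>
     \<comment> \<open>well defined on L^2 classes\<close>
     (\<forall>u v. memL2 M u \<longrightarrow> memL2 M v \<longrightarrow> (AE x in M. u x = v x) \<longrightarrow> E u = E v)
     \<comment> \<open>convex\<close>
   \<and> (\<forall>u v t. memL2 M u \<longrightarrow> memL2 M v \<longrightarrow> 0 \<le> t \<longrightarrow> t \<le> 1 \<longrightarrow>
        E (\<lambda>x. t * u x + (1 - t) * v x) \<le> ennreal t * E u + ennreal (1 - t) * E v)
     \<comment> \<open>lower semicontinuous w.r.t. the L^2 norm\<close>
   \<and> (\<forall>u us. memL2 M u \<longrightarrow> (\<forall>n. memL2 M (us n)) \<longrightarrow>
        (\<lambda>n. L2_norm M (\<lambda>x. us n x - u x)) \<longlonglongrightarrow> 0 \<longrightarrow>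
        E u \<le> liminf (\<lambda>n. E (us n)))
     \<comment> \<open>densely defined\<close>
   \<and> (\<forall>u e. memL2 M u \<longrightarrow> e > 0 \<longrightarrow>
        (\<exists>v. memL2 M v \<and> E v < \<infinity> \<and> L2_norm M (\<lambda>x. u x - v x) < e))
     \<comment> \<open>(1)\<close>
   \<and> (\<forall>u v. memL2 M u \<longrightarrow> memL2 M v \<longrightarrow>
        E (\<lambda>x. min (u x) (v x)) + E (\<lambda>x. max (u x) (v x)) \<le> E u + E v)
     \<comment> \<open>(2)\<close>
   \<and> (\<forall>u v (\<alpha>::real). memL2 M u \<longrightarrow> memL2 M v \<longrightarrow> \<alpha> > 0 \<longrightarrow>
        (let H = (\<lambda>x. (1/2) * (posp (u x - v x + \<alpha>) - negp (u x - v x - \<alpha>)))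
         in E (\<lambda>x. v x + H x) + E (\<lambda>x. u x - H x) \<le> E u + E v))"

definition even_form :: "(('a \<Rightarrow> real) \<Rightarrow> ennreal) \<Rightarrow> 'a measure \<Rightarrow> bool" where
  "even_form E M \<longleftrightarrow> E (\<lambda>x. 0) = 0 \<and> (\<forall>u. memL2 M u \<longrightarrow> E (\<lambda>x. - u x) = E u)"

definition growth_type_at_most :: "'a measure \<Rightarrow> (('a \<Rightarrow> real) \<Rightarrow> ennreal) \<Rightarrow> real \<Rightarrow> bool" where
  "growth_type_at_most M E r \<longleftrightarrow>
     (\<forall>u (l::real). memL2 M u \<longrightarrow> l \<ge> 1 \<longrightarrow> E (\<lambda>x. l * u x) \<le> ennreal (l powr r) * E u)"

definition subgradient :: "'a measure \<Rightarrow> (('a \<Rightarrow> real) \<Rightarrow> ennreal) \<Rightarrow> (('a \<Rightarrow> real) \<times> ('a \<Rightarrow> real)) set" where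
  "subgradient M E = {(u, f). memL2 M u \<and> memL2 M f \<and> E u < \<infinity> \<and>
     (\<forall>v. memL2 M v \<longrightarrow>
        ereal (L2_inner M f (\<lambda>x. v x - u x)) \<le> enn2ereal (E v) - enn2ereal (E u))}"

definition E1 :: "'a measure \<Rightarrow> (('a \<Rightarrow> real) \<Rightarrow> ennreal) \<Rightarrow> ('a \<Rightarrow> real) \<Rightarrow> ennreal" where
  "E1 M E u = ennreal ((L2_norm M u)^2) + E u"

definition dirichlet_space :: "'a measure \<Rightarrow> (('a \<Rightarrow> real) \<Rightarrow> ennreal) \<Rightarrow> ('a \<Rightarrow> real) set" where
  "dirichlet_space M E = {u. memL2 M u \<and> (\<exists>l>0. E1 M E (\<lambda>x. l * u x) < \<infinity>)}"

definition D_norm :: "'a measure \<Rightarrow> (('a \<Rightarrow> real) \<Rightarrow> ennreal) \<Rightarrow> ('a \<Rightarrow> real) \<Rightarrow> real" where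
  "D_norm M E u = Inf {l. l > 0 \<and> E1 M E (\<lambda>x. u x / l) \<le> 1}"

definition embeds_continuously_Lp :: "'a measure \<Rightarrow> (('a \<Rightarrow> real) \<Rightarrow> ennreal) \<Rightarrow> real \<Rightarrow> bool" where
  "embeds_continuously_Lp M E p \<longleftrightarrow>
     (\<forall>u\<in>dirichlet_space M E. memLp p M u) \<and>
     (\<exists>c. \<forall>u\<in>dirichlet_space M E. Lp_norm p M u \<le> c * D_norm M E u)"

end

theory Submission
  imports Defs
begin

(*
  Testing the subgradient inequality with the contraction (2) for v = 0 and alpha = k shows that
  T_k u = sgn u (|u| - k)_+ / 2 satisfies E(T_k u) + 2 lam ||T_k u||_2^2 <= I_k := <f, T_k u>.
  Convexity (for shrinking) and the growth bound (for stretching) turn this into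
  ||T_k u||_D <~ I_k^(1/r), so the embedding gives J_k := ||T_k u||_p^p <~ I_k^(p/r).
  Hoelder's inequality with exponents q, p and 1 / (1 - 1/q - 1/p) on the level set
  A_k = {|u| > k}, outside of which T_k u vanishes, gives
  I_k <= ||f||_q J_k^(1/p) |A_k|^(1 - 1/q - 1/p). Hence J_k <~ |A_k|^beta with beta = (1 - 1/q - 1/p) p / (r - 1), and beta > 1 is exactly the
  assumption on p, q, r. Chebyshev's inequality turns this into |A_h| <~ |A_k|^beta / (h - k)^p
  for h > k, and Stampacchia's iteration lemma yields |A_K| = 0 for some K.
*)

lemma Youngs_inequality_3:
  fixes x y z p q s :: real
  assumes exps: "p > 1" "q > 1" "s > 1" "1/p + 1/q + 1/s = 1"
    and nonneg: "0 \<le> x" "0 \<le> y" "0 \<le> z"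
  shows "x * y * z \<le> x powr p / p + y powr q / q + z powr s / s"
proof -
  have "0 < 1/p" "0 < 1/q" "0 < 1/s"
    using exps by simp_all
  then have "0 < 1/q + 1/s" "1/q + 1/s < 1"
    using exps(4) by linarith+
  define t where "t = 1 / (1/q + 1/s)"
  have t: "t > 1" "1/p + 1/t = 1"
    using exps \<open>0 < 1/q + 1/s\<close> \<open>1/q + 1/s < 1\<close> by (simp_all add: t_def)
  have "1/(q/t) + 1/(s/t) = t * (1/q + 1/s)"
    by (simp add: distrib_left)
  also have "\<dots> = 1"
    using \<open>0 < 1/q + 1/s\<close> by (simp add: t_def)
  finally have qs: "q/t > 1" "s/t > 1" "1/(q/t) + 1/(s/t) = 1"
    using exps by (simp_all add: t_def field_simps)
  have "(y * z) powr t = y powr t * z powr t"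
    using nonneg by (simp add: powr_mult)
  also have "\<dots> \<le> (y powr t) powr (q/t) / (q/t) + (z powr t) powr (s/t) / (s/t)"
    using qs by (intro Youngs_inequality) auto
  also have "\<dots> = t * (y powr q / q + z powr s / s)"
    using t by (simp add: powr_powr field_simps)
  finally have "(y * z) powr t / t \<le> y powr q / q + z powr s / s"
    using t by (simp add: divide_le_eq mult.commute)
  moreover have "x * (y * z) \<le> x powr p / p + (y * z) powr t / t"
    using exps t nonneg by (intro Youngs_inequality) auto
  ultimately show ?thesis
    by (simp add: mult.assoc)
qed

lemma Youngs_inequality_3_scaled:
  fixes x y z X Y Z p q s :: real
  assumes exps: "p > 0" "q > 0" "s > 0" "1/p + 1/q + 1/s = 1"
    and nonneg: "0 \<le> x" "0 \<le> y" "0 \<le> z" and pos: "X > 0" "Y > 0" "Z > 0"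
  shows "x * y * z \<le> X powr (1/p) * Y powr (1/q) * Z powr (1/s)
    * (x powr p / (X * p) + y powr q / (Y * q) + z powr s / (Z * s))"
proof -
  have "0 < 1/p" "0 < 1/q" "0 < 1/s"
    using exps by simp_all
  then have "1/p < 1" "1/q < 1" "1/s < 1"
    using exps(4) by linarith+
  then have exps_gt_1: "p > 1" "q > 1" "s > 1"
    using exps by (simp_all add: divide_less_eq_1)
  have "x * y * z = X powr (1/p) * Y powr (1/q) * Z powr (1/s)
      * ((x / X powr (1/p)) * (y / Y powr (1/q)) * (z / Z powr (1/s)))"
    using pos by (simp add: field_simps)
  also have "\<dots> \<le> X powr (1/p) * Y powr (1/q) * Z powr (1/s)
      * ((x / X powr (1/p)) powr p / p + (y / Y powr (1/q)) powr q / q + (z / Z powr (1/s)) powr s / s)"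
    using exps_gt_1 exps(4) nonneg pos by (intro mult_left_mono Youngs_inequality_3) auto
  also have "\<dots> = X powr (1/p) * Y powr (1/q) * Z powr (1/s)
      * (x powr p / (X * p) + y powr q / (Y * q) + z powr s / (Z * s))"
    using pos nonneg exps by (simp add: powr_divide powr_powr)
  finally show ?thesis .
qed

lemma power_bound_absorb:
  fixes J I m C1 C2 r p \<theta> :: real
  assumes J: "J \<ge> 0" and m: "m \<ge> 0" and C1: "C1 \<ge> 0" and C2: "C2 \<ge> 0" and I: "I \<ge> 0"
    and r: "r > 1" and p: "p > 0"
    and J_le: "J \<le> C1 * I powr (p / r)" and I_le: "I \<le> C2 * J powr (1 / p) * m powr \<theta>"
  shows "J \<le> (C1 * C2 powr (p / r)) powr (r / (r - 1)) * m powr (\<theta> * p / (r - 1))"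
proof (cases "J = 0")
  case True
  then show ?thesis by simp
next
  case False
  then have J_pos: "J > 0"
    using J by simp
  have "I powr (p / r) \<le> C2 powr (p / r) * J powr (1 / r) * m powr (\<theta> * p / r)"
  proof -
    have "I powr (p / r) \<le> (C2 * J powr (1 / p) * m powr \<theta>) powr (p / r)"
      using I I_le p r by (intro powr_mono2) auto
    also have "\<dots> = C2 powr (p / r) * J powr (1 / r) * m powr (\<theta> * p / r)"
      using C2 J m p r by (simp add: powr_mult powr_powr)
    finally show ?thesis .
  qed
  then have "J \<le> (C1 * C2 powr (p / r) * m powr (\<theta> * p / r)) * J powr (1 / r)"
    using J_le C1 by (auto simp: ac_simps intro: order_trans mult_left_mono)
  then have "J powr (1 - 1 / r) * J powr (1 / r)
      \<le> (C1 * C2 powr (p / r) * m powr (\<theta> * p / r)) * J powr (1 / r)"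
    using J_pos by (simp flip: powr_add)
  then have "J powr (1 - 1 / r) \<le> C1 * C2 powr (p / r) * m powr (\<theta> * p / r)"
    using J_pos by (simp add: mult_le_cancel_right)
  have "J = (J powr (1 - 1 / r)) powr (r / (r - 1))"
    using J_pos r by (simp add: powr_powr field_simps)
  also have "\<dots> \<le> (C1 * C2 powr (p / r) * m powr (\<theta> * p / r)) powr (r / (r - 1))"
    using \<open>J powr (1 - 1 / r) \<le> _\<close> r by (intro powr_mono2) auto
  also have "\<dots> = (C1 * C2 powr (p / r)) powr (r / (r - 1)) * m powr (\<theta> * p / (r - 1))"
  proof -
    have "\<theta> * p / r * (r / (r - 1)) = \<theta> * p / (r - 1)"
      using r by (simp add: field_simps)
    then show ?thesis
      using C1 C2 m r by (simp add: powr_mult powr_powr)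
  qed
  finally show ?thesis .
qed

lemma exponent_gap:
  fixes p q r :: real
  assumes r: "r > 1" and p: "p > 0" and q: "q > 0" and pqr: "(1 - 2/q) * (p/r) > 1"
  shows "(1 - 1/q - 1/p) * p / (r - 1) > 1" and "1/q + 1/p < 1"
proof -
  have "(1 - 2/q) * p > r"
    using pqr r by (simp add: field_simps)
  moreover have "(1 - 1/q - 1/p) * p = (1 - 2/q) * p + p/q - 1"
    using p by (simp add: field_simps)
  moreover have "p/q > 0"
    using p q by simp
  ultimately have gap: "(1 - 1/q - 1/p) * p > r - 1"
    by linarith
  then show "(1 - 1/q - 1/p) * p / (r - 1) > 1"
    using r by simp
  show "1/q + 1/p < 1"
    using gap r p by (smt (verit) mult_nonpos_nonneg)
qed

lemma Stampacchia_dyadic_decay: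
  fixes \<phi> :: "real \<Rightarrow> real" and C \<beta> p k0 d :: real
  assumes nonneg: "\<And>k. k0 \<le> k \<Longrightarrow> 0 \<le> \<phi> k"
    and C: "C > 0" and \<beta>: "\<beta> > 1" and p: "p > 0"
    and decay: "\<And>k h. k0 \<le> k \<Longrightarrow> k < h \<Longrightarrow> \<phi> h \<le> C * \<phi> k powr \<beta> / (h - k) powr p"
    and \<phi>0: "\<phi> k0 > 0"
    and d: "d > 0" "d powr p = C * \<phi> k0 powr (\<beta> - 1) * 2 powr (p / (\<beta> - 1) * \<beta>)"
  shows "\<phi> (k0 + d - d / 2 ^ n) \<le> \<phi> k0 * 2 powr (- (n * (p / (\<beta> - 1))))"
proof (induction n)
  case 0
  then show ?case by simp
next
  case (Suc n)
  define \<mu> where "\<mu> = p / (\<beta> - 1)"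
  have \<mu>\<beta>: "\<mu> * \<beta> = \<mu> + p"
    using \<beta> by (simp add: \<mu>_def field_simps)
  define k where "k n = k0 + d - d / 2 ^ n" for n :: nat
  have k_ge: "k0 \<le> k n" for n
    using d by (simp add: k_def field_simps)
  have k_step: "k (Suc n) - k n = d / 2 ^ Suc n"
    by (simp add: k_def field_simps)
  then have "k n < k (Suc n)"
    using d by (metis diff_gt_0_iff_gt divide_pos_pos zero_less_numeral zero_less_power)
  then have "\<phi> (k (Suc n)) \<le> C * \<phi> (k n) powr \<beta> / (d / 2 ^ Suc n) powr p"
    unfolding k_step[symmetric] by (rule decay[OF k_ge])
  also have "\<dots> \<le> C * (\<phi> k0 * 2 powr (- (n * \<mu>))) powr \<beta> / (d / 2 ^ Suc n) powr p"
    using Suc nonneg[OF k_ge] C \<beta>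
    by (intro divide_right_mono mult_left_mono powr_mono2) (auto simp: k_def \<mu>_def)
  also have "\<dots> = \<phi> k0 * (C * \<phi> k0 powr (\<beta> - 1))
      * (2 powr (- (n * (\<mu> * \<beta>))) * 2 powr (Suc n * p)) / d powr p"
  proof -
    have "(2::real) ^ Suc n = 2 powr Suc n"
      by (rule powr_realpow[symmetric]) simp
    then have "(d / 2 ^ Suc n) powr p = d powr p / 2 powr (Suc n * p)"
      using d by (simp add: powr_divide powr_powr del: power_Suc)
    moreover have "(\<phi> k0 * 2 powr (- (n * \<mu>))) powr \<beta>
        = \<phi> k0 * \<phi> k0 powr (\<beta> - 1) * 2 powr (- (n * (\<mu> * \<beta>)))"
      using \<phi>0 by (simp add: powr_mult powr_powr powr_diff mult.assoc)
    ultimately show ?thesis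
      by simp
  qed
  also have "\<dots> = \<phi> k0 * 2 powr (- (Suc n * \<mu>))"
  proof -
    have "2 powr (- (n * (\<mu> * \<beta>))) * 2 powr (Suc n * p) = 2 powr (- (Suc n * \<mu>)) * 2 powr (\<mu> * \<beta>)"
      unfolding powr_add[symmetric] \<mu>\<beta> by (simp add: algebra_simps)
    then show ?thesis
      using C \<phi>0 unfolding d(2) \<mu>_def by simp
  qed
  finally show ?case
    by (simp add: k_def \<mu>_def)
qed

lemma Stampacchia_iteration:
  fixes \<phi> :: "real \<Rightarrow> real" and C \<beta> p k0 :: real
  assumes nonneg: "\<And>k. k0 \<le> k \<Longrightarrow> 0 \<le> \<phi> k"
    and antimono: "\<And>k h. k0 \<le> k \<Longrightarrow> k \<le> h \<Longrightarrow> \<phi> h \<le> \<phi> k"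
    and C: "C > 0" and \<beta>: "\<beta> > 1" and p: "p > 0"
    and decay: "\<And>k h. k0 \<le> k \<Longrightarrow> k < h \<Longrightarrow> \<phi> h \<le> C * \<phi> k powr \<beta> / (h - k) powr p"
  shows "\<exists>K\<ge>k0. \<phi> K = 0"
proof (cases "\<phi> k0 = 0")
  case True
  then show ?thesis by auto
next
  case False
  then have \<phi>0: "\<phi> k0 > 0"
    using nonneg[of k0] by simp
  define \<mu> where "\<mu> = p / (\<beta> - 1)"
  have \<mu>: "\<mu> > 0"
    using p \<beta> by (simp add: \<mu>_def)
  define d where "d = (C * \<phi> k0 powr (\<beta> - 1) * 2 powr (\<mu> * \<beta>)) powr (1 / p)"
  have d: "d > 0" "d powr p = C * \<phi> k0 powr (\<beta> - 1) * 2 powr (\<mu> * \<beta>)"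
    using C \<phi>0 p by (simp_all add: d_def powr_powr)
  have "\<phi> (k0 + d) \<le> \<phi> k0 * (2 powr (- \<mu>)) ^ n" for n
  proof -
    have "\<phi> (k0 + d) \<le> \<phi> (k0 + d - d / 2 ^ n)"
      using d by (intro antimono) (auto simp: field_simps)
    also have "\<dots> \<le> \<phi> k0 * 2 powr (- (n * \<mu>))"
      unfolding \<mu>_def by (rule Stampacchia_dyadic_decay[OF nonneg C \<beta> p decay \<phi>0 d[unfolded \<mu>_def]])
    finally show ?thesis
      by (simp add: powr_power mult.commute)
  qed
  moreover have "(\<lambda>n. \<phi> k0 * (2 powr (- \<mu>)) ^ n) \<longlonglongrightarrow> 0"
    using \<mu> by (intro tendsto_mult_right_zero LIMSEQ_power_zero) (simp add: powr_less_one)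
  ultimately have "\<phi> (k0 + d) \<le> 0"
    by (intro LIMSEQ_le_const) (auto intro: exI[of _ 0])
  then show ?thesis
    using nonneg[of "k0 + d"] d by (intro exI[of _ "k0 + d"]) auto
qed

lemma Holder_inequality_3:
  fixes a b c :: "'a \<Rightarrow> real" and p q s :: real
  assumes [measurable]: "a \<in> borel_measurable M" "b \<in> borel_measurable M" "c \<in> borel_measurable M"
    and nonneg: "\<And>x. 0 \<le> a x" "\<And>x. 0 \<le> b x" "\<And>x. 0 \<le> c x"
    and int: "integrable M (\<lambda>x. a x powr p)" "integrable M (\<lambda>x. b x powr q)"
      "integrable M (\<lambda>x. c x powr s)"
    and exps: "p > 0" "q > 0" "s > 0" "1/p + 1/q + 1/s = 1"
  shows "integrable M (\<lambda>x. a x * b x * c x)"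
    and "(\<integral>x. a x * b x * c x \<partial>M) \<le> (\<integral>x. a x powr p \<partial>M) powr (1/p)
           * (\<integral>x. b x powr q \<partial>M) powr (1/q) * (\<integral>x. c x powr s \<partial>M) powr (1/s)"
proof -
  define Fa Fb Fc where "Fa = (\<integral>x. a x powr p \<partial>M)" and "Fb = (\<integral>x. b x powr q \<partial>M)"
    and "Fc = (\<integral>x. c x powr s \<partial>M)"
  define K where "K = Fa powr (1/p) * Fb powr (1/q) * Fc powr (1/s)"
  have "integrable M (\<lambda>x. a x * b x * c x) \<and> (\<integral>x. a x * b x * c x \<partial>M) \<le> K"
  proof (cases "Fa = 0 \<or> Fb = 0 \<or> Fc = 0")
    case True
    have "AE x in M. a x * b x * c x = 0"
      using True integral_nonneg_eq_0_iff_AE[OF int(1)] integral_nonneg_eq_0_iff_AE[OF int(2)]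
        integral_nonneg_eq_0_iff_AE[OF int(3)] nonneg exps
      by (auto simp: Fa_def Fb_def Fc_def elim!: eventually_mono)
    then show ?thesis
      by (auto simp: K_def integrable_cong_AE[of _ _ "\<lambda>x. 0"] integral_eq_zero_AE)
  next
    case False
    then have pos: "Fa > 0" "Fb > 0" "Fc > 0"
      by (auto simp: Fa_def Fb_def Fc_def order.strict_iff_order nonneg integral_nonneg_AE)
    define g where "g = (\<lambda>x. K * (a x powr p / (Fa * p) + b x powr q / (Fb * q) + c x powr s / (Fc * s)))"
    have g: "integrable M g" "(\<integral>x. g x \<partial>M) = K"
      using int pos exps(4) by (simp_all add: g_def Fa_def Fb_def Fc_def)
    have abc_le_g: "a x * b x * c x \<le> g x" for x
      unfolding g_def K_def using exps nonneg pos by (rule Youngs_inequality_3_scaled)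
    have "norm (a x * b x * c x) \<le> norm (g x)" for x
      using abc_le_g[of x] nonneg[of x] by simp
    then have "integrable M (\<lambda>x. a x * b x * c x)"
      by (intro Bochner_Integration.integrable_bound[OF g(1)] AE_I2) auto
    moreover have "(\<integral>x. a x * b x * c x \<partial>M) \<le> (\<integral>x. g x \<partial>M)"
      using calculation g(1) abc_le_g by (intro integral_mono)
    ultimately show ?thesis
      using g(2) by simp
  qed
  then show "integrable M (\<lambda>x. a x * b x * c x)"
    and "(\<integral>x. a x * b x * c x \<partial>M) \<le> Fa powr (1/p) * Fb powr (1/q) * Fc powr (1/s)"
    by (simp_all add: K_def)
qed

lemma memL2_dominated:
  assumes "memL2 M u" "v \<in> borel_measurable M" "\<And>x. \<bar>v x\<bar> \<le> \<bar>u x\<bar>"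
  shows "memL2 M v"
proof -
  have "integrable M (\<lambda>x. (v x)^2)"
  proof (rule Bochner_Integration.integrable_bound)
    show "integrable M (\<lambda>x. (u x)^2)"
      using assms(1) by (simp add: memL2_def)
    show "AE x in M. norm ((v x)^2) \<le> norm ((u x)^2)"
      using assms(3) by (auto simp: abs_le_square_iff)
  qed (use assms(2) in measurable)
  then show ?thesis
    using assms(2) by (simp add: memL2_def)
qed

lemma integrable_mult_memL2:
  assumes "memL2 M u" "memL2 M v"
  shows "integrable M (\<lambda>x. u x * v x)"
proof (rule Bochner_Integration.integrable_bound)
  show "integrable M (\<lambda>x. (u x)^2 + (v x)^2)"
    using assms by (simp add: memL2_def)
  have "\<bar>u x\<bar> * \<bar>v x\<bar> \<le> (u x)^2 + (v x)^2" for x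
  proof -
    have "0 \<le> \<bar>u x\<bar> * \<bar>v x\<bar>"
      by simp
    then show ?thesis
      using sum_squares_bound[of "\<bar>u x\<bar>" "\<bar>v x\<bar>", unfolded mult.assoc power2_abs] by linarith
  qed
  then show "AE x in M. norm (u x * v x) \<le> norm ((u x)^2 + (v x)^2)"
    by (simp add: abs_mult)
qed (use assms in \<open>auto simp: memL2_def\<close>)

lemma Markov_inequality_subset:
  fixes h :: "'a \<Rightarrow> real"
  assumes h: "integrable M h" "\<And>x. x \<in> space M \<Longrightarrow> 0 \<le> h x"
    and c: "c > 0" and B: "B \<in> sets M" "\<And>x. x \<in> B \<Longrightarrow> c \<le> h x"
  shows "emeasure M B < \<infinity>" and "measure M B \<le> (\<integral>x. h x \<partial>M) / c"
proof -
  have "B \<subseteq> {x\<in>space M. c \<le> h x}"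
    using B sets.sets_into_space by auto
  then have "emeasure M B \<le> emeasure M {x\<in>space M. c \<le> h x}"
    using h by (intro emeasure_mono) auto
  also have "\<dots> \<le> ennreal ((1/c) * (\<integral>x. h x \<partial>M))"
    using h c by (intro integral_Markov_inequality) auto
  finally have le: "emeasure M B \<le> ennreal ((1/c) * (\<integral>x. h x \<partial>M))" .
  then show fin: "emeasure M B < \<infinity>"
    using le_less_trans by fastforce
  have "ennreal (measure M B) \<le> ennreal ((1/c) * (\<integral>x. h x \<partial>M))"
    using fin le by (simp add: emeasure_eq_ennreal_measure)
  then show "measure M B \<le> (\<integral>x. h x \<partial>M) / c"
    using c h by (subst (asm) ennreal_le_iff) (auto simp: integral_nonneg_AE)
qed

(* What the contraction (2) with v = 0 and alpha = k leaves of t, see half_excess_contraction. *)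
definition half_excess :: "real \<Rightarrow> real \<Rightarrow> real" where
  "half_excess k t = sgn t * max (\<bar>t\<bar> - k) 0 / 2"

lemma half_excess_contraction:
  "k > 0 \<Longrightarrow> t - 1/2 * (posp (t + k) - negp (t - k)) = half_excess k t"
  by (auto simp: half_excess_def posp_def negp_def max_def sgn_if field_simps)

lemma abs_half_excess: "0 \<le> k \<Longrightarrow> \<bar>half_excess k t\<bar> = max (\<bar>t\<bar> - k) 0 / 2"
  by (auto simp: half_excess_def abs_mult sgn_if)

lemma half_excess_eq_0: "\<bar>t\<bar> \<le> k \<Longrightarrow> half_excess k t = 0"
  by (simp add: half_excess_def)

lemma abs_half_excess_le: "0 \<le> k \<Longrightarrow> \<bar>half_excess k t\<bar> \<le> \<bar>t\<bar>"
  by (simp add: abs_half_excess)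

lemma abs_diff_half_excess_le: "0 \<le> k \<Longrightarrow> \<bar>t - half_excess k t\<bar> \<le> \<bar>t\<bar>"
  by (auto simp: half_excess_def sgn_if max_def)

lemma half_excess_square_le:
  assumes "0 \<le> k"
  shows "2 * (half_excess k t)^2 \<le> t * half_excess k t"
proof -
  define e where "e = max (\<bar>t\<bar> - k) 0"
  have e: "0 \<le> e" "e \<le> \<bar>t\<bar>"
    using assms by (auto simp: e_def)
  have "(half_excess k t)^2 = (e / 2)^2"
    using abs_half_excess[OF assms, of t] unfolding e_def by (metis power2_abs)
  moreover have "t * half_excess k t = \<bar>t\<bar> * e / 2"
    by (simp add: half_excess_def e_def sgn_if)
  moreover have "e * e \<le> \<bar>t\<bar> * e"
    using e by (intro mult_right_mono)
  ultimately show ?thesis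
    by (simp add: power2_eq_square)
qed

lemma borel_measurable_half_excess [measurable]:
  assumes [measurable]: "u \<in> borel_measurable M"
  shows "(\<lambda>x. half_excess k (u x)) \<in> borel_measurable M"
  unfolding half_excess_def by measurable

lemma memL2_half_excess:
  assumes u: "memL2 M u" and k: "0 \<le> k"
  shows "memL2 M (\<lambda>x. half_excess k (u x))" and "memL2 M (\<lambda>x. u x - half_excess k (u x))"
proof -
  have [measurable]: "u \<in> borel_measurable M"
    using u by (simp add: memL2_def)
  show "memL2 M (\<lambda>x. half_excess k (u x))" "memL2 M (\<lambda>x. u x - half_excess k (u x))"
    using k by (auto intro!: memL2_dominated[OF u] simp: abs_half_excess_le abs_diff_half_excess_le)
qed

lemma integral_half_excess_square_le:
  assumes u: "memL2 M u" and k: "0 \<le> k"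
  shows "2 * (\<integral>x. (half_excess k (u x))^2 \<partial>M) \<le> (\<integral>x. u x * half_excess k (u x) \<partial>M)"
proof -
  have "(\<integral>x. 2 * (half_excess k (u x))^2 \<partial>M) \<le> (\<integral>x. u x * half_excess k (u x) \<partial>M)"
    using memL2_half_excess(1)[OF u k] integrable_mult_memL2[OF u memL2_half_excess(1)[OF u k]]
      half_excess_square_le[OF k]
    by (intro integral_mono) (auto simp: memL2_def)
  then show ?thesis
    by simp
qed

lemma dirichlet_form_half_excess:
  assumes dir: "dirichlet_form M E" and E0: "E (\<lambda>x. 0) = 0" and u: "memL2 M u" and k: "k > 0"
  shows "E (\<lambda>x. u x - half_excess k (u x)) + E (\<lambda>x. half_excess k (u x)) \<le> E u"
proof -
  have "memL2 M (\<lambda>x. 0)"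
    by (simp add: memL2_def)
  then have "E (\<lambda>x. 0 + 1/2 * (posp (u x - 0 + k) - negp (u x - 0 - k)))
      + E (\<lambda>x. u x - 1/2 * (posp (u x - 0 + k) - negp (u x - 0 - k))) \<le> E u + E (\<lambda>x. 0)"
    using dir u k unfolding dirichlet_form_def Let_def by blast
  moreover have "(\<lambda>x. u x - 1/2 * (posp (u x - 0 + k) - negp (u x - 0 - k))) = (\<lambda>x. half_excess k (u x))"
    using half_excess_contraction[OF k] by simp
  moreover have "(\<lambda>x. 0 + 1/2 * (posp (u x - 0 + k) - negp (u x - 0 - k))) = (\<lambda>x. u x - half_excess k (u x))"
    unfolding half_excess_contraction[OF k, symmetric] by simp
  ultimately show ?thesis
    using E0 by simp
qed

lemma subgradient_energy_le:
  assumes sub: "(u, g) \<in> subgradient M E" and v: "memL2 M (\<lambda>x. u x - w x)"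
    and decomp: "E (\<lambda>x. u x - w x) + E w \<le> E u"
  shows "E w < \<infinity>" and "enn2real (E w) \<le> (\<integral>x. g x * w x \<partial>M)"
proof -
  have Eu: "E u < \<infinity>"
    using sub by (simp add: subgradient_def)
  have "\<forall>v. memL2 M v \<longrightarrow> ereal (L2_inner M g (\<lambda>x. v x - u x)) \<le> enn2ereal (E v) - enn2ereal (E u)"
    using sub by (simp add: subgradient_def)
  then have "ereal (L2_inner M g (\<lambda>x. (u x - w x) - u x)) \<le> enn2ereal (E (\<lambda>x. u x - w x)) - enn2ereal (E u)"
    using v by blast
  moreover have "L2_inner M g (\<lambda>x. (u x - w x) - u x) = - (\<integral>x. g x * w x \<partial>M)"
    by (simp add: L2_inner_def flip: integral_minus)
  ultimately have sg: "ereal (- (\<integral>x. g x * w x \<partial>M)) \<le> enn2ereal (E (\<lambda>x. u x - w x)) - enn2ereal (E u)"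
    by simp
  have fin: "E (\<lambda>x. u x - w x) < \<infinity>" "E w < \<infinity>"
    using le_less_trans[OF decomp Eu] by simp_all
  then show "E w < \<infinity>" by simp
  define a b c where "a = enn2real (E (\<lambda>x. u x - w x))" and "b = enn2real (E w)"
    and "c = enn2real (E u)"
  have nonneg: "0 \<le> a" "0 \<le> b" "0 \<le> c"
    by (simp_all add: a_def b_def c_def)
  have abc: "E (\<lambda>x. u x - w x) = ennreal a" "E w = ennreal b" "E u = ennreal c"
    using fin Eu by (simp_all add: a_def b_def c_def)
  have "a + b \<le> c"
    using decomp nonneg unfolding abc by (simp flip: ennreal_plus add: ennreal_le_iff)
  moreover have "- (\<integral>x. g x * w x \<partial>M) \<le> a - c"
    using sg nonneg unfolding abc by simp
  ultimately show "enn2real (E w) \<le> (\<integral>x. g x * w x \<partial>M)"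
    by (simp add: b_def[symmetric])
qed

lemma half_excess_energy_estimate:
  assumes dir: "dirichlet_form M E" and E0: "E (\<lambda>x. 0) = 0"
    and sol: "(u, \<lambda>x. f x - lam * u x) \<in> subgradient M E" and f: "memL2 M f"
    and lam: "lam > 0" and k: "k > 0"
  shows "E (\<lambda>x. half_excess k (u x)) \<le> ennreal (\<integral>x. f x * half_excess k (u x) \<partial>M)"
    and "(\<integral>x. (half_excess k (u x))^2 \<partial>M) \<le> (\<integral>x. f x * half_excess k (u x) \<partial>M) / (2 * lam)"
proof -
  define T where "T = (\<lambda>x. half_excess k (u x))"
  have u: "memL2 M u"
    using sol by (simp add: subgradient_def)
  note T = memL2_half_excess[OF u less_imp_le[OF k], folded T_def]
  have fin: "E T < \<infinity>" and E_le: "enn2real (E T) \<le> (\<integral>x. (f x - lam * u x) * T x \<partial>M)"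
    using subgradient_energy_le[OF sol T(2)] dirichlet_form_half_excess[OF dir E0 u k]
    by (simp_all add: T_def)
  have "(\<integral>x. (f x - lam * u x) * T x \<partial>M) = (\<integral>x. f x * T x \<partial>M) - lam * (\<integral>x. u x * T x \<partial>M)"
    using integrable_mult_memL2[OF f T(1)] integrable_mult_memL2[OF u T(1)]
    by (simp add: left_diff_distrib mult.assoc)
  moreover have "lam * (2 * (\<integral>x. (T x)^2 \<partial>M)) \<le> lam * (\<integral>x. u x * T x \<partial>M)"
    using integral_half_excess_square_le[OF u less_imp_le[OF k]] lam
    by (intro mult_left_mono) (auto simp: T_def)
  ultimately have energy: "enn2real (E T) + 2 * lam * (\<integral>x. (T x)^2 \<partial>M) \<le> (\<integral>x. f x * T x \<partial>M)"
    using E_le by simp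
  moreover have "0 \<le> 2 * lam * (\<integral>x. (T x)^2 \<partial>M)"
    using lam by simp
  ultimately have "ennreal (enn2real (E T)) \<le> ennreal (\<integral>x. f x * T x \<partial>M)"
    by (intro ennreal_leI) linarith
  then have "E T \<le> ennreal (\<integral>x. f x * T x \<partial>M)"
    using fin by simp
  then show "E (\<lambda>x. half_excess k (u x)) \<le> ennreal (\<integral>x. f x * half_excess k (u x) \<partial>M)"
    by (simp add: T_def)
  have "2 * lam * (\<integral>x. (T x)^2 \<partial>M) \<le> (\<integral>x. f x * T x \<partial>M)"
    using energy enn2real_nonneg[of "E T"] by linarith
  then show "(\<integral>x. (half_excess k (u x))^2 \<partial>M) \<le> (\<integral>x. f x * half_excess k (u x) \<partial>M) / (2 * lam)"
    using lam by (simp add: T_def le_divide_eq mult.commute)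
qed

lemma energy_div_le:
  assumes dir: "dirichlet_form M E" and E0: "E (\<lambda>x. 0) = 0"
    and growth: "growth_type_at_most M E r" and w: "memL2 M w" and l: "l > 0"
  shows "E (\<lambda>x. w x / l) \<le> ennreal (max ((1/l) powr r) (1/l)) * E w"
proof (cases "l \<le> 1")
  case True
  then have "1 \<le> 1/l"
    using l by simp
  then have "E (\<lambda>x. (1/l) * w x) \<le> ennreal ((1/l) powr r) * E w"
    using growth w unfolding growth_type_at_most_def by blast
  also have "\<dots> \<le> ennreal (max ((1/l) powr r) (1/l)) * E w"
    by (intro mult_right_mono ennreal_leI) auto
  finally show ?thesis
    by simp
next
  case False
  have convex: "E (\<lambda>x. t * v x + (1 - t) * v' x) \<le> ennreal t * E v + ennreal (1 - t) * E v'"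
    if "memL2 M v" "memL2 M v'" "0 \<le> t" "t \<le> 1" for v v' t
    using dir that unfolding dirichlet_form_def by blast
  have "memL2 M (\<lambda>x. 0)"
    by (simp add: memL2_def)
  then have "E (\<lambda>x. (1/l) * w x + (1 - 1/l) * 0) \<le> ennreal (1/l) * E w + ennreal (1 - 1/l) * E (\<lambda>x. 0)"
    using False l by (intro convex[OF w]) auto
  also have "\<dots> \<le> ennreal (max ((1/l) powr r) (1/l)) * E w"
    using E0 by (auto intro!: mult_right_mono ennreal_leI)
  finally show ?thesis
    by simp
qed

lemma D_norm_le:
  assumes "l > 0" and "E1 M E (\<lambda>x. w x / l) \<le> 1"
  shows "0 \<le> D_norm M E w" and "D_norm M E w \<le> l"
proof -
  have l: "l \<in> {l. l > 0 \<and> E1 M E (\<lambda>x. w x / l) \<le> 1}"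
    using assms by simp
  show "D_norm M E w \<le> l"
    unfolding D_norm_def by (rule cInf_lower[OF l]) (auto intro: bdd_belowI[of _ 0])
  show "0 \<le> D_norm M E w"
    unfolding D_norm_def using l by (intro cInf_greatest) auto
qed

lemma square_L2_norm_div_le_half:
  assumes L2: "(\<integral>x. (w x)^2 \<partial>M) \<le> a * I" and a: "0 \<le> a" and I: "0 \<le> I" "I \<le> B"
    and r: "r \<ge> 2" and K: "K > 0" "2 * a * B powr (1 - 2/r) \<le> K^2"
    and l: "l > 0" "K * I powr (1/r) \<le> l"
  shows "(L2_norm M (\<lambda>x. w x / l))^2 \<le> 1/2"
proof -
  have "I = I powr (1 - 2/r) * (I powr (1/r))^2"
    using I by (simp add: power2_eq_square flip: powr_add)
  also have "\<dots> \<le> B powr (1 - 2/r) * (l / K)^2"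
    using I r K l by (intro mult_mono power_mono powr_mono2) (auto simp: field_simps)
  finally have "2 * (a * I) \<le> 2 * a * B powr (1 - 2/r) * (l / K)^2"
    using a by (simp add: mult_left_mono)
  also have "\<dots> \<le> K^2 * (l / K)^2"
    using K by (intro mult_right_mono) auto
  also have "\<dots> = l^2"
    using K by (simp add: power_divide)
  finally have "(\<integral>x. (w x)^2 \<partial>M) \<le> l^2 / 2"
    using L2 by simp
  then show ?thesis
    using l by (simp add: L2_norm_def power_divide integral_nonneg_AE divide_le_eq)
qed

lemma max_inverse_powr_mult_le_half:
  fixes I B K l r :: real
  assumes r: "r \<ge> 1" and I: "0 \<le> I" "I \<le> B"
    and K: "K \<ge> 2" "2 * B powr (1 - 1/r) \<le> K" and l: "l > 0" "K * I powr (1/r) \<le> l"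
  shows "max ((1/l) powr r) (1/l) * I \<le> 1/2"
proof -
  have I_le: "I powr (1/r) \<le> l / K"
    using K l by (simp add: field_simps)
  have "(1/l) powr r * I \<le> 1/2"
  proof -
    have "I = (I powr (1/r)) powr r"
      using I r by (simp add: powr_powr)
    also have "\<dots> \<le> (l / K) powr r"
      using I_le r by (intro powr_mono2) auto
    finally have "(1/l) powr r * I \<le> (1/l) powr r * (l / K) powr r"
      using l by (intro mult_left_mono) auto
    also have "\<dots> = 1 / K powr r"
      using l K by (simp add: powr_divide)
    also have "\<dots> \<le> 1/2"
      using K powr_mono[of 1 r K] r by (simp add: divide_le_eq)
    finally show ?thesis .
  qed
  moreover have "(1/l) * I \<le> 1/2"
  proof -
    have "I = I powr (1 - 1/r) * I powr (1/r)"
      using I by (simp flip: powr_add)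
    also have "\<dots> \<le> B powr (1 - 1/r) * (l / K)"
      using I I_le r by (intro mult_mono powr_mono2) auto
    also have "\<dots> \<le> l / 2"
      using K l by (simp add: field_simps)
    finally show ?thesis
      using l by (simp add: field_simps)
  qed
  ultimately show ?thesis
    by (simp add: max_def)
qed

lemma energy_div_le_half:
  assumes dir: "dirichlet_form M E" and E0: "E (\<lambda>x. 0) = 0"
    and growth: "growth_type_at_most M E r" and r: "r \<ge> 1" and w: "memL2 M w"
    and Ew: "E w \<le> ennreal I" and I: "0 \<le> I" "I \<le> B"
    and K: "K \<ge> 2" "2 * B powr (1 - 1/r) \<le> K"
    and l: "l > 0" "K * I powr (1/r) \<le> l"
  shows "E (\<lambda>x. w x / l) \<le> ennreal (1/2)"
proof -
  have "E (\<lambda>x. w x / l) \<le> ennreal (max ((1/l) powr r) (1/l)) * E w"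
    by (rule energy_div_le[OF dir E0 growth w l(1)])
  also have "\<dots> \<le> ennreal (max ((1/l) powr r) (1/l)) * ennreal I"
    using Ew by (rule mult_left_mono) simp
  also have "\<dots> = ennreal (max ((1/l) powr r) (1/l) * I)"
    using I l by (simp add: ennreal_mult'')
  also have "\<dots> \<le> ennreal (1/2)"
    by (intro ennreal_leI max_inverse_powr_mult_le_half[OF r I K l])
  finally show ?thesis .
qed

lemma E1_div_le_one:
  assumes dir: "dirichlet_form M E" and E0: "E (\<lambda>x. 0) = 0"
    and growth: "growth_type_at_most M E r" and r: "r \<ge> 2" and w: "memL2 M w"
    and Ew: "E w \<le> ennreal I" and L2: "(\<integral>x. (w x)^2 \<partial>M) \<le> a * I" and a: "0 \<le> a"
    and I: "0 \<le> I" "I \<le> B"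
    and K: "K \<ge> 2" "2 * a * B powr (1 - 2/r) \<le> K^2" "2 * B powr (1 - 1/r) \<le> K"
    and l: "l > 0" "K * I powr (1/r) \<le> l"
  shows "E1 M E (\<lambda>x. w x / l) \<le> 1"
proof -
  have "E1 M E (\<lambda>x. w x / l) \<le> ennreal (1/2) + ennreal (1/2)"
    unfolding E1_def
  proof (rule add_mono)
    show "ennreal ((L2_norm M (\<lambda>x. w x / l))^2) \<le> ennreal (1/2)"
      using L2 a I r K l by (intro ennreal_leI square_L2_norm_div_le_half) auto
    show "E (\<lambda>x. w x / l) \<le> ennreal (1/2)"
      using r by (intro energy_div_le_half[OF dir E0 growth _ w Ew I K(1,3) l]) simp
  qed
  also have "\<dots> = ennreal (1/2 + 1/2)"
    by (rule ennreal_plus[symmetric]) auto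
  finally show ?thesis
    by simp
qed

lemma D_norm_le_energy_power:
  assumes dir: "dirichlet_form M E" and E0: "E (\<lambda>x. 0) = 0"
    and growth: "growth_type_at_most M E r" and r: "r \<ge> 2" and a: "0 \<le> a"
  obtains K where "K > 0"
    and "\<And>w I. memL2 M w \<Longrightarrow> E w \<le> ennreal I \<Longrightarrow> (\<integral>x. (w x)^2 \<partial>M) \<le> a * I \<Longrightarrow>
      0 \<le> I \<Longrightarrow> I \<le> B \<Longrightarrow> 0 \<le> D_norm M E w \<and> D_norm M E w \<le> K * I powr (1/r)"
proof -
  define K where "K = 2 + 2 * a * B powr (1 - 2/r) + 2 * B powr (1 - 1/r)"
  have K: "K \<ge> 2" "2 * B powr (1 - 1/r) \<le> K"
    using a by (simp_all add: K_def)
  have "2 * a * B powr (1 - 2/r) \<le> 2 * K"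
    using a by (simp add: K_def)
  also have "\<dots> \<le> K^2"
    using K by (simp add: power2_eq_square)
  finally have K2: "2 * a * B powr (1 - 2/r) \<le> K^2" .
  show thesis
  proof (rule that)
    show "K > 0"
      using K by simp
    fix w I
    assume w: "memL2 M w" and Ew: "E w \<le> ennreal I" and L2: "(\<integral>x. (w x)^2 \<partial>M) \<le> a * I"
      and I: "0 \<le> I" "I \<le> B"
    \<comment> \<open>Every \<open>l > K * I powr (1/r)\<close> is admissible in the infimum defining the norm; this also covers \<open>I = 0\<close>.\<close>
    have D: "0 \<le> D_norm M E w \<and> D_norm M E w \<le> l" if l: "K * I powr (1/r) < l" for l
    proof -
      have "0 < l"
        using K l by (smt (verit) mult_nonneg_nonneg powr_ge_zero)
      moreover have "E1 M E (\<lambda>x. w x / l) \<le> 1"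
        using \<open>0 < l\<close> l by (intro E1_div_le_one[OF dir E0 growth r w Ew L2 a I K(1) K2 K(2)]) auto
      ultimately show ?thesis
        using D_norm_le by blast
    qed
    show "0 \<le> D_norm M E w \<and> D_norm M E w \<le> K * I powr (1/r)"
      using D[of "K * I powr (1/r) + 1"] D by (auto intro: dense_ge)
  qed
qed

lemma Lp_integral_le_energy_power:
  assumes dir: "dirichlet_form M E" and E0: "E (\<lambda>x. 0) = 0"
    and growth: "growth_type_at_most M E r" and r: "r \<ge> 2" and a: "0 \<le> a"
    and emb: "embeds_continuously_Lp M E p" and p: "p > 0"
  obtains C where "C \<ge> 0"
    and "\<And>w I. memL2 M w \<Longrightarrow> E w \<le> ennreal I \<Longrightarrow> (\<integral>x. (w x)^2 \<partial>M) \<le> a * I \<Longrightarrow>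
      0 \<le> I \<Longrightarrow> I \<le> B \<Longrightarrow> memLp p M w \<and> (\<integral>x. \<bar>w x\<bar> powr p \<partial>M) \<le> C * I powr (p / r)"
proof -
  obtain K where K: "K > 0"
    and D: "\<And>w I. memL2 M w \<Longrightarrow> E w \<le> ennreal I \<Longrightarrow> (\<integral>x. (w x)^2 \<partial>M) \<le> a * I \<Longrightarrow>
      0 \<le> I \<Longrightarrow> I \<le> B \<Longrightarrow> 0 \<le> D_norm M E w \<and> D_norm M E w \<le> K * I powr (1/r)"
    using D_norm_le_energy_power[OF dir E0 growth r a] by blast
  obtain c where c: "\<And>w. w \<in> dirichlet_space M E \<Longrightarrow> Lp_norm p M w \<le> c * D_norm M E w"
    using emb by (auto simp: embeds_continuously_Lp_def)
  show thesis
  proof (rule that)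
    show "(max c 0 * K) powr p \<ge> 0"
      by simp
    fix w I
    assume w: "memL2 M w" and Ew: "E w \<le> ennreal I" and L2: "(\<integral>x. (w x)^2 \<partial>M) \<le> a * I"
      and I: "0 \<le> I" "I \<le> B"
    have "E1 M E (\<lambda>x. 1 * w x) < \<infinity>"
      using Ew by (simp add: E1_def le_less_trans)
    then have dom: "w \<in> dirichlet_space M E"
      using w unfolding dirichlet_space_def by (auto intro!: exI[of _ 1])
    then have "memLp p M w"
      using emb by (simp add: embeds_continuously_Lp_def)
    have "Lp_norm p M w \<le> max c 0 * D_norm M E w"
      using c[OF dom] D[OF w Ew L2 I] by (smt (verit) mult_right_mono)
    also have "\<dots> \<le> max c 0 * (K * I powr (1/r))"
      using D[OF w Ew L2 I] by (intro mult_left_mono) auto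
    finally have Lp: "Lp_norm p M w \<le> max c 0 * (K * I powr (1/r))" .
    have "(\<integral>x. \<bar>w x\<bar> powr p \<partial>M) = Lp_norm p M w powr p"
      using p by (simp add: Lp_norm_def powr_powr integral_nonneg_AE)
    also have "\<dots> \<le> (max c 0 * (K * I powr (1/r))) powr p"
      using Lp p by (intro powr_mono2) (auto simp: Lp_norm_def)
    also have "\<dots> = (max c 0 * K) powr p * I powr (p / r)"
      using K I by (simp add: powr_mult powr_powr)
    finally show "memLp p M w \<and> (\<integral>x. \<bar>w x\<bar> powr p \<partial>M) \<le> (max c 0 * K) powr p * I powr (p / r)"
      using \<open>memLp p M w\<close> by blast
  qed
qed

lemma emeasure_level_set_finite:
  assumes u: "memL2 M u" and k: "k > 0"
  shows "emeasure M {x \<in> space M. k < \<bar>u x\<bar>} < \<infinity>"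
proof (rule Markov_inequality_subset(1))
  show "integrable M (\<lambda>x. (u x)^2)"
    using u by (simp add: memL2_def)
  show "k^2 \<le> (u x)^2" if "x \<in> {x \<in> space M. k < \<bar>u x\<bar>}" for x
    using that k by (simp add: abs_le_square_iff[symmetric])
qed (use u k in \<open>auto simp: memL2_def\<close>)

lemma measure_level_set_le_half_excess:
  assumes [measurable]: "u \<in> borel_measurable M"
    and int: "integrable M (\<lambda>x. \<bar>half_excess k (u x)\<bar> powr p)"
    and p: "p > 0" and k: "0 \<le> k" "k < h"
  shows "((h - k) / 2) powr p * measure M {x \<in> space M. h < \<bar>u x\<bar>}
      \<le> (\<integral>x. \<bar>half_excess k (u x)\<bar> powr p \<partial>M)"
proof -
  have "measure M {x \<in> space M. h < \<bar>u x\<bar>}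
      \<le> (\<integral>x. \<bar>half_excess k (u x)\<bar> powr p \<partial>M) / ((h - k) / 2) powr p"
  proof (rule Markov_inequality_subset(2)[OF int])
    show "((h - k) / 2) powr p \<le> \<bar>half_excess k (u x)\<bar> powr p"
      if "x \<in> {x \<in> space M. h < \<bar>u x\<bar>}" for x
      using that k p by (intro powr_mono2) (auto simp: abs_half_excess)
  qed (use k in auto)
  then show ?thesis
    using k by (simp add: field_simps)
qed

lemma memLinf_if_half_excess_decay:
  assumes u: "memL2 M u" and p: "p > 0" and \<beta>: "\<beta> > 1" and C: "C \<ge> 0"
    and decay: "\<And>k. 1 \<le> k \<Longrightarrow> integrable M (\<lambda>x. \<bar>half_excess k (u x)\<bar> powr p)
      \<and> (\<integral>x. \<bar>half_excess k (u x)\<bar> powr p \<partial>M) \<le> C * measure M {x \<in> space M. k < \<bar>u x\<bar>} powr \<beta>"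
  shows "memLinf M u"
proof -
  have [measurable]: "u \<in> borel_measurable M"
    using u by (simp add: memL2_def)
  define m where "m k = measure M {x \<in> space M. k < \<bar>u x\<bar>}" for k
  have "\<exists>K\<ge>1. m K = 0"
  proof (rule Stampacchia_iteration[where C = "2 powr p * C + 1"])
    show "m h \<le> m k" if "1 \<le> k" "k \<le> h" for k h
      unfolding m_def using emeasure_level_set_finite[OF u, of k] that
      by (intro measure_mono_fmeasurable) (auto simp: fmeasurable_def)
    show "m h \<le> (2 powr p * C + 1) * m k powr \<beta> / (h - k) powr p" if "1 \<le> k" "k < h" for k h
    proof -
      have "((h - k) / 2) powr p * m h \<le> C * m k powr \<beta>"
        using measure_level_set_le_half_excess[of u M k p h] decay[of k] that p
        by (auto simp: m_def)
      then have "m h \<le> 2 powr p * C * m k powr \<beta> / (h - k) powr p"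
        using that by (simp add: powr_divide field_simps)
      also have "\<dots> \<le> (2 powr p * C + 1) * m k powr \<beta> / (h - k) powr p"
        by (intro divide_right_mono mult_right_mono) auto
      finally show ?thesis .
    qed
  qed (use p \<beta> C in \<open>auto simp: m_def intro!: add_nonneg_pos\<close>)
  then obtain K where K: "K \<ge> 1" "m K = 0"
    by blast
  then have "emeasure M {x \<in> space M. K < \<bar>u x\<bar>} = 0"
    using emeasure_level_set_finite[OF u, of K] by (simp add: m_def emeasure_eq_ennreal_measure)
  then have "AE x in M. \<bar>u x\<bar> \<le> K"
    by (intro AE_I'[of "{x \<in> space M. K < \<bar>u x\<bar>}"]) auto
  then show ?thesis
    by (auto simp: memLinf_def)
qed

lemma integral_mult_half_excess_le:
  assumes f: "memL2 M f" and u: "memL2 M u" and k: "0 \<le> k"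
  shows "(\<integral>x. f x * half_excess k (u x) \<partial>M) \<le> (\<integral>x. \<bar>f x * u x\<bar> \<partial>M)"
proof (rule integral_mono)
  have [measurable]: "u \<in> borel_measurable M"
    using u by (simp add: memL2_def)
  show "integrable M (\<lambda>x. f x * half_excess k (u x))"
    using k by (intro integrable_mult_memL2[OF f] memL2_dominated[OF u]) (auto simp: abs_half_excess_le)
  show "integrable M (\<lambda>x. \<bar>f x * u x\<bar>)"
    using integrable_mult_memL2[OF f u] by simp
  show "f x * half_excess k (u x) \<le> \<bar>f x * u x\<bar>" for x
  proof -
    have "f x * half_excess k (u x) \<le> \<bar>f x\<bar> * \<bar>half_excess k (u x)\<bar>"
      by (simp flip: abs_mult)
    also have "\<dots> \<le> \<bar>f x\<bar> * \<bar>u x\<bar>"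
      using abs_half_excess_le[OF k] by (intro mult_left_mono) auto
    finally show ?thesis
      by (simp add: abs_mult)
  qed
qed

lemma integral_mult_half_excess_le_Holder:
  assumes f: "memLp q M f" and u: "memL2 M u" and k: "k > 0"
    and T: "integrable M (\<lambda>x. \<bar>half_excess k (u x)\<bar> powr p)"
    and exps: "q > 0" "p > 0" "1/q + 1/p < 1"
  shows "(\<integral>x. f x * half_excess k (u x) \<partial>M) \<le> (\<integral>x. \<bar>f x\<bar> powr q \<partial>M) powr (1/q)
      * (\<integral>x. \<bar>half_excess k (u x)\<bar> powr p \<partial>M) powr (1/p)
      * measure M {x \<in> space M. k < \<bar>u x\<bar>} powr (1 - 1/q - 1/p)"
proof -
  define A where "A = {x \<in> space M. k < \<bar>u x\<bar>}"
  have [measurable]: "u \<in> borel_measurable M" "f \<in> borel_measurable M"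
    using u f by (simp_all add: memL2_def memLp_def)
  then have [measurable]: "A \<in> sets M"
    unfolding A_def by measurable
  define s where "s = 1 / (1 - 1/q - 1/p)"
  have s: "s > 0" "1/q + 1/p + 1/s = 1" "1/s = 1 - 1/q - 1/p"
    using exps by (simp_all add: s_def)
  have indicator_powr: "indicator A x powr s = (indicator A x :: real)" for x
    by (simp add: indicator_def)
  have fT_eq: "\<bar>f x\<bar> * \<bar>half_excess k (u x)\<bar> * indicator A x = \<bar>f x * half_excess k (u x)\<bar>"
    if "x \<in> space M" for x
    using that by (auto simp: A_def indicator_def abs_mult half_excess_eq_0)
  have fq: "integrable M (\<lambda>x. \<bar>f x\<bar> powr q)"
    using f by (simp add: memLp_def)
  have "integrable M (\<lambda>x. indicator A x powr s :: real)"
    unfolding indicator_powr using emeasure_level_set_finite[OF u k] by (simp add: A_def)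
  note Holder = Holder_inequality_3[where a = "\<lambda>x. \<bar>f x\<bar>" and b = "\<lambda>x. \<bar>half_excess k (u x)\<bar>"
      and c = "indicator A" and p = q and q = p,
      OF _ _ _ abs_ge_zero abs_ge_zero indicator_pos_le fq T this exps(1,2) s(1,2), simplified]
  have "integrable M (\<lambda>x. \<bar>f x * half_excess k (u x)\<bar>)"
    by (rule Bochner_Integration.integrable_bound[OF Holder(1)]) (auto intro!: AE_I2 simp: fT_eq)
  then have "(\<integral>x. f x * half_excess k (u x) \<partial>M) \<le> (\<integral>x. \<bar>f x * half_excess k (u x)\<bar> \<partial>M)"
    by (intro integral_mono) (auto simp: integrable_abs_iff)
  also have "\<dots> = (\<integral>x. \<bar>f x\<bar> * \<bar>half_excess k (u x)\<bar> * indicator A x \<partial>M)"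
    using fT_eq by (intro Bochner_Integration.integral_cong) auto
  also note Holder(2)
  finally show ?thesis
    unfolding indicator_powr using s by (simp add: A_def)
qed

lemma half_excess_Lp_estimate:
  assumes dir: "dirichlet_form M E" and E0: "E (\<lambda>x. 0) = 0"
    and growth: "growth_type_at_most M E r" and r: "r \<ge> 2"
    and emb: "embeds_continuously_Lp M E p" and p: "p > 0"
    and sol: "(u, \<lambda>x. f x - lam * u x) \<in> subgradient M E" and f: "memL2 M f" and lam: "lam > 0"
  obtains C where "C \<ge> 0"
    and "\<And>k. k > 0 \<Longrightarrow> 0 \<le> (\<integral>x. f x * half_excess k (u x) \<partial>M)
      \<and> integrable M (\<lambda>x. \<bar>half_excess k (u x)\<bar> powr p)
      \<and> (\<integral>x. \<bar>half_excess k (u x)\<bar> powr p \<partial>M) \<le> C * (\<integral>x. f x * half_excess k (u x) \<partial>M) powr (p / r)"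
proof -
  have u: "memL2 M u"
    using sol by (simp add: subgradient_def)
  have "0 \<le> 1 / (2 * lam)"
    using lam by simp
  then obtain C where "C \<ge> 0"
    and C: "\<And>w I. memL2 M w \<Longrightarrow> E w \<le> ennreal I \<Longrightarrow> (\<integral>x. (w x)^2 \<partial>M) \<le> 1 / (2 * lam) * I \<Longrightarrow>
      0 \<le> I \<Longrightarrow> I \<le> (\<integral>x. \<bar>f x * u x\<bar> \<partial>M) \<Longrightarrow>
      memLp p M w \<and> (\<integral>x. \<bar>w x\<bar> powr p \<partial>M) \<le> C * I powr (p / r)"
    using Lp_integral_le_energy_power[OF dir E0 growth r _ emb p, where B = "\<integral>x. \<bar>f x * u x\<bar> \<partial>M"]
    by blast
  show thesis
  proof (rule that)
    show "C \<ge> 0" by fact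
    fix k :: real
    assume k: "k > 0"
    note energy = half_excess_energy_estimate[OF dir E0 sol f lam k]
    have I_nonneg: "0 \<le> (\<integral>x. f x * half_excess k (u x) \<partial>M)"
      using order_trans[OF integral_nonneg_AE energy(2)] lam by (simp add: zero_le_divide_iff)
    moreover have "memLp p M (\<lambda>x. half_excess k (u x)) \<and> (\<integral>x. \<bar>half_excess k (u x)\<bar> powr p \<partial>M)
        \<le> C * (\<integral>x. f x * half_excess k (u x) \<partial>M) powr (p / r)"
      using energy I_nonneg integral_mult_half_excess_le[OF f u less_imp_le[OF k]]
      by (intro C memL2_half_excess(1)[OF u less_imp_le[OF k]]) simp_all
    ultimately show "0 \<le> (\<integral>x. f x * half_excess k (u x) \<partial>M)
      \<and> integrable M (\<lambda>x. \<bar>half_excess k (u x)\<bar> powr p)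
      \<and> (\<integral>x. \<bar>half_excess k (u x)\<bar> powr p \<partial>M) \<le> C * (\<integral>x. f x * half_excess k (u x) \<partial>M) powr (p / r)"
      by (simp add: memLp_def)
  qed
qed

theorem mainTheorem7:
  fixes M :: "('a::t2_space) measure"
    and E :: "('a \<Rightarrow> real) \<Rightarrow> ennreal"
    and r q p lam :: real
    and f u :: "'a \<Rightarrow> real"
  assumes borelM: "sets M = sets borel"
    and full_support: "\<forall>U. open U \<longrightarrow> U \<noteq> {} \<longrightarrow> emeasure M U \<noteq> 0"
    and dir: "dirichlet_form M E"
    and ev: "even_form E M"
    and r: "r \<ge> 2" and growth: "growth_type_at_most M E r"
    and q: "q \<ge> 2" and lam: "lam > 0"
    and f2: "memL2 M f" and fq: "memLp q M f"
    and u2: "memL2 M u"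
    and sol: "(u, (\<lambda>x. f x - lam * u x)) \<in> subgradient M E"
    and p: "p \<ge> 2" and pqr: "(1 - 2 / q) * (p / r) > 1"
    and emb: "embeds_continuously_Lp M E p"
  shows "memLinf M u"
proof -
  have E0: "E (\<lambda>x. 0) = 0" and "p > 0"
    using ev p by (simp_all add: even_form_def)
  have exps: "(1 - 1/q - 1/p) * p / (r - 1) > 1" "1/q + 1/p < 1"
    using exponent_gap[of r p q] r p q pqr by auto
  define I J m where "I k = (\<integral>x. f x * half_excess k (u x) \<partial>M)"
    and "J k = (\<integral>x. \<bar>half_excess k (u x)\<bar> powr p \<partial>M)"
    and "m k = measure M {x \<in> space M. k < \<bar>u x\<bar>}" for k
  obtain C where C: "C \<ge> 0"
    and Lp: "\<And>k. k > 0 \<Longrightarrow> 0 \<le> I k \<and> integrable M (\<lambda>x. \<bar>half_excess k (u x)\<bar> powr p)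
      \<and> J k \<le> C * I k powr (p / r)"
    using half_excess_Lp_estimate[OF dir E0 growth r emb \<open>p > 0\<close> sol f2 lam]
    unfolding I_def J_def by blast
  define F where "F = (\<integral>x. \<bar>f x\<bar> powr q \<partial>M) powr (1/q)"
  have decay: "J k \<le> (C * F powr (p / r)) powr (r / (r - 1)) * m k powr ((1 - 1/q - 1/p) * p / (r - 1))"
    if "1 \<le> k" for k
  proof -
    have k: "k > 0"
      using that by simp
    then have "I k \<le> F * J k powr (1/p) * m k powr (1 - 1/q - 1/p)"
      using Lp[OF k] exps(2) p q unfolding I_def J_def m_def F_def
      by (intro integral_mult_half_excess_le_Holder[OF fq u2]) auto
    then show ?thesis
      using Lp[OF k] C r p by (intro power_bound_absorb) (auto simp: J_def m_def F_def)
  qed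
  then show ?thesis
    using Lp C \<open>p > 0\<close> unfolding J_def m_def
    by (intro memLinf_if_half_excess_decay[OF u2 _ exps(1), where C = "(C * F powr (p / r)) powr (r / (r - 1))"])
      auto
qed

end
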